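(* Let $a,b\in\mathbb{Q}_3$ with $\gamma(a)=m\ge4$, $\gamma(b)=0$ and $(b_0,b_1)=(1,0)$ or $(2,2)$. Then $x=\sum_{k\ge0}x_k3^k\in\mathbb{Z}_3^*$ is a solution of $x^3+ax=b$ if and only if the congruences $$x_0^3\equiv b_0\pmod3,\qquad x_0^3\equiv b_0+3b_1\pmod9,$$ $$x_0^2x_1+M_1(x_0)\equiv b_2\pmod3,$$ $$x_0^2x_2+P_3^2(x_0,x_1)+x_0x_1^2+M_2(x_0,x_1)\equiv b_3\pmod3,$$ $$x_0^2x_{k-1}+P_k^{k-1}(x_0,\dots,x_{k-2})+2x_0x_1x_{k-2}\equiv b_k\pmod3,\quad 4\le k\le m-1,$$ $$x_0^2x_{m-1}+P_m^{m-1}(x_0,\dots,x_{m-2})+2x_0x_1x_{m-2}+x_0a_0\equiv b_m\pmod3,$$ $$x_0^2x_{k-1}+P_k^{k-1}(x_0,\dots,x_{k-2})+2x_0x_1x_{k-2}+x_{k-m}a_0+\dots+x_0a_{k-m}\equiv b_k\pmod3,\quad k\ge m+1,$$ are fulfilled, where the integers $M_k(x_0,\dots,x_{k-1})$ are defined by $$x_0^3=b_0+3b_1+9M_1(x_0),$$ $$x_0^2x_1=b_2-M_1(x_0)+3M_2(x_0,x_1),$$ $$x_0^2x_2+P_3^2(x_0,x_1)+x_0x_1^2=b_3-M_2(x_0,x_1)+3M_3(x_0,x_1,x_2),$$ $$x_0^2x_{k-1}+P_k^{k-1}(x_0,\dots,x_{k-2})+2x_0x_1x_{k-2}=b_k-M_{k-1}(x_0,\dots,x_{k-2})+3M_k(x_0,\dots,x_{k-1}),\quad4\le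 k\le m-1,$$ $$x_0^2x_{m-1}+P_m^{m-1}(x_0,\dots,x_{m-2})+2x_0x_1x_{m-2}+x_0a_0=b_m-M_{m-1}(x_0,\dots,x_{m-2})+3M_m(x_0,\dots,x_{m-1}),$$ $$x_0^2x_{k-1}+P_k^{k-1}(x_0,\dots,x_{k-2})+2x_0x_1x_{k-2}+x_{k-m}a_0+\dots+x_0a_{k-m}=b_k-M_{k-1}(x_0,\dots,x_{k-2})+3M_k(x_0,\dots,x_{k-1}),\quad k\ge m+1.$$
   Context: Write $a=3^{\gamma(a)}(a_0+a_13+a_23^2+\dots)$, $b=3^{\gamma(b)}(b_0+b_13+b_23^2+\dots)$ in canonical form, with digits $a_j,b_j\in\{0,1,2\}$, $a_0,b_0\ne0$, $\gamma(a),\gamma(b)\in\mathbb{Z}$. $\mathbb{Z}_3^*$ is the set of $3$-adic units; $x\in\mathbb{Z}_3^*$ is written $x=x_0+x_13+x_23^2+\dots$ with $x_j\in\{0,1,2\}$, $x_0\ne0$. For $j\le k$, $P_k^j(x_0,\dots,x_{j-1})=\sum\frac{6}{m_0!\cdots m_{j-1}!}x_0^{m_0}\cdots x_{j-1}^{m_{j-1}}$, the sum over nonnegative integers $m_0,\dots,m_{j-1}$ with $\sum_{i=0}^{j-1}m_i=3$ and $\sum_{i=1}^{j-1}im_i=k$. *)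

theory Defs
  imports Main "HOL-Number_Theory.Cong"
begin

text \<open>3-adic integers are represented by their canonical digit sequences
  \<open>d :: nat \<Rightarrow> int\<close> with digits in {0,1,2}; the element is \<open>\<Sum>j. d j * 3^j\<close>.
  Its image in Z/3^N is the truncation \<open>\<Sum>j<N. d j * 3^j\<close>.\<close>

definition digits3 :: "(nat \<Rightarrow> int) \<Rightarrow> bool" where
  "digits3 d \<longleftrightarrow> (\<forall>j. d j \<in> {0, 1, 2})"

definition trunc3 :: "(nat \<Rightarrow> int) \<Rightarrow> nat \<Rightarrow> int" where
  "trunc3 d N = (\<Sum>j<N. d j * 3 ^ j)"

text \<open>Equality \<open>x^3 + a x = b\<close> in Z_3 = lim Z/3^N, where
  \<open>a = 3^m (a_0 + a_1 3 + ...)\<close>, \<open>b = b_0 + b_1 3 + ...\<close>, \<open>x = x_0 + x_1 3 + ...\<close>: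
  the equation holds modulo every power of 3.\<close>
definition cubic_sol3 :: "nat \<Rightarrow> (nat \<Rightarrow> int) \<Rightarrow> (nat \<Rightarrow> int) \<Rightarrow> (nat \<Rightarrow> int) \<Rightarrow> bool" where
  "cubic_sol3 m a b x \<longleftrightarrow>
     (\<forall>N. [trunc3 x N ^ 3 + 3 ^ m * trunc3 a N * trunc3 x N = trunc3 b N] (mod 3 ^ N))"

text \<open>\<open>P_k^j(x_0,...,x_{j-1})\<close>: sum over \<open>m_0,...,m_{j-1}\<close> with \<open>\<Sum> m_i = 3\<close>,
  \<open>\<Sum> i m_i = k\<close> of \<open>6/(m_0!...m_{j-1}!) x_0^{m_0} ... x_{j-1}^{m_{j-1}}\<close>
  (the coefficient is an integer, a multinomial coefficient).\<close>
definition Pkj :: "nat \<Rightarrow> nat \<Rightarrow> (nat \<Rightarrow> int) \<Rightarrow> int" where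
  "Pkj k j x = (\<Sum>ms \<in> {ms :: nat \<Rightarrow> nat. (\<forall>i\<ge>j. ms i = 0) \<and> (\<Sum>i<j. ms i) = 3
                                  \<and> (\<Sum>i<j. i * ms i) = k}.
      (6 div (\<Prod>i<j. int (fact (ms i)))) * (\<Prod>i<j. x i ^ ms i))"

definition Lk :: "nat \<Rightarrow> (nat \<Rightarrow> int) \<Rightarrow> (nat \<Rightarrow> int) \<Rightarrow> nat \<Rightarrow> int" where
  "Lk m a x k =
    (if k = 2 then x 0 ^ 2 * x 1
     else if k = 3 then x 0 ^ 2 * x 2 + Pkj 3 2 x + x 0 * x 1 ^ 2
     else x 0 ^ 2 * x (k - 1) + Pkj k (k - 1) x + 2 * x 0 * x 1 * x (k - 2)
          + (if m \<le> k then (\<Sum>i\<le>k - m. x (k - m - i) * a i) else 0))"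

text \<open>The integers \<open>M_k(x_0,...,x_{k-1})\<close>: \<open>x_0^3 = b_0 + 3 b_1 + 9 M_1\<close> and
  \<open>L_k = b_k - M_{k-1} + 3 M_k\<close> for \<open>k \<ge> 2\<close> (divisions are exact whenever the
  preceding congruences hold).\<close>
fun Mk :: "nat \<Rightarrow> (nat \<Rightarrow> int) \<Rightarrow> (nat \<Rightarrow> int) \<Rightarrow> (nat \<Rightarrow> int) \<Rightarrow> nat \<Rightarrow> int" where
  "Mk m a b x 0 = 0"
| "Mk m a b x (Suc 0) = (x 0 ^ 3 - b 0 - 3 * b 1) div 9"
| "Mk m a b x (Suc (Suc n)) =
     (Lk m a x (Suc (Suc n)) - b (Suc (Suc n)) + Mk m a b x (Suc n)) div 3"

end

theory Submission
  imports Defs "HOL-Computational_Algebra.Polynomial"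
begin

text \<open>Let \<open>X\<close>, \<open>A\<close>, \<open>B\<close> be the polynomials whose coefficients are the first \<open>N\<close> digits
  of \<open>x\<close>, \<open>a\<close>, \<open>b\<close>. Then \<open>X(3)^3 + 3^m A(3) X(3) - B(3)\<close> is congruent modulo \<open>3^N\<close> to
  \<open>\<Sum>k<N. c_k 3^k\<close>, where \<open>c_k\<close> are the coefficients of \<open>X^3 + T^m A X - B\<close>. The coefficient
  of \<open>T^k\<close> in \<open>X^3\<close> is the multinomial sum \<open>P_k^{k+1}\<close>; moving its two top terms
  \<open>3 (x_0^2 x_k + 2 x_0 x_1 x_{k-1})\<close> one place up turns the \<open>c_k\<close> into the left-hand sides
  \<open>L_k - b_k\<close> of the theorem, at the cost of a tail divisible by \<open>3^N\<close>. So the equation holds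
  modulo every \<open>3^N\<close> iff each digit \<open>L_k - b_k\<close>, plus the carry \<open>M_{k-1}\<close> from the place
  below, vanishes modulo 3.\<close>

definition exp_vectors :: "nat \<Rightarrow> nat \<Rightarrow> (nat \<Rightarrow> nat) set" where
  "exp_vectors s j = {ms. (\<forall>i\<ge>j. ms i = 0) \<and> (\<Sum>i<j. ms i) = s}"

definition exp_weight :: "nat \<Rightarrow> (nat \<Rightarrow> nat) \<Rightarrow> nat" where
  "exp_weight j ms = (\<Sum>i<j. i * ms i)"

definition multinomial_coeff :: "nat \<Rightarrow> nat \<Rightarrow> (nat \<Rightarrow> nat) \<Rightarrow> int" where
  "multinomial_coeff j s ms = int (fact s) div (\<Prod>i<j. int (fact (ms i)))"

definition exp_monomial :: "nat \<Rightarrow> (nat \<Rightarrow> int) \<Rightarrow> (nat \<Rightarrow> nat) \<Rightarrow> int" where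
  "exp_monomial j y ms = (\<Prod>i<j. y i ^ ms i)"

definition power_coeff :: "nat \<Rightarrow> nat \<Rightarrow> nat \<Rightarrow> (nat \<Rightarrow> int) \<Rightarrow> int" where
  "power_coeff s k j y =
     (\<Sum>ms\<in>exp_vectors s j. if exp_weight j ms = k
                             then multinomial_coeff j s ms * exp_monomial j y ms else 0)"

lemma exp_vectors_0: "exp_vectors s 0 = (if s = 0 then {\<lambda>_. 0} else {})"
  by (auto simp: exp_vectors_def fun_eq_iff)

lemma sum_lessThan_fun_upd: "(\<Sum>i<(j::nat). f ((ms(j := t)) i)) = (\<Sum>i<j. f (ms i))"
  by (rule sum.cong) auto

lemma prod_lessThan_fun_upd: "(\<Prod>i<(j::nat). f i ((ms(j := t)) i)) = (\<Prod>i<j. f i (ms i))"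
  by (rule prod.cong) auto

lemma exp_vectors_Suc:
  "exp_vectors s (Suc j) = (\<lambda>(t, ms). ms(j := t)) ` (SIGMA t:{..s}. exp_vectors (s - t) j)"
proof (rule set_eqI, rule iffI)
  fix ms' assume ms': "ms' \<in> exp_vectors s (Suc j)"
  have s: "(\<Sum>i<j. ms' i) + ms' j = s" using ms' by (simp add: exp_vectors_def)
  have "(\<Sum>i<j. (ms'(j := 0)) i) = (\<Sum>i<j. ms' i)"
    using sum_lessThan_fun_upd[of "\<lambda>x. x" ms' 0 j] by simp
  then have "ms'(j := 0) \<in> exp_vectors (s - ms' j) j" using ms' s by (auto simp: exp_vectors_def)
  moreover have "ms' j \<le> s" using s by auto
  ultimately show "ms' \<in> (\<lambda>(t, ms). ms(j := t)) ` (SIGMA t:{..s}. exp_vectors (s - t) j)"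
    by (intro rev_image_eqI[of "(ms' j, ms'(j := 0))"]) auto
next
  fix ms' assume "ms' \<in> (\<lambda>(t, ms). ms(j := t)) ` (SIGMA t:{..s}. exp_vectors (s - t) j)"
  then obtain t ms where "t \<le> s" "ms \<in> exp_vectors (s - t) j" "ms' = ms(j := t)" by auto
  then show "ms' \<in> exp_vectors s (Suc j)"
    using sum_lessThan_fun_upd[of "\<lambda>x. x" ms t j] by (auto simp: exp_vectors_def)
qed

lemma inj_on_exp_vectors_upd:
  "inj_on (\<lambda>(t, ms). ms(j := t)) (SIGMA t:{..s}. exp_vectors (s - t) j)"
proof (rule inj_onI, clarsimp)
  fix t1 ms1 t2 ms2
  assume ms: "ms1 \<in> exp_vectors (s - t1) j" "ms2 \<in> exp_vectors (s - t2) j"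
    and eq: "ms1(j := t1) = ms2(j := t2)"
  have "ms1 i = ms2 i" for i
    using ms fun_cong[OF eq, of i] by (cases "i = j") (auto simp: exp_vectors_def)
  then show "t1 = t2 \<and> ms1 = ms2" using fun_cong[OF eq, of j] by auto
qed

lemma finite_exp_vectors: "finite (exp_vectors s j)"
  by (induction j arbitrary: s) (simp_all add: exp_vectors_0 exp_vectors_Suc)

lemma prod_fact_dvd_fact_sum: "(\<Prod>i<(j::nat). fact (ms i) :: nat) dvd fact (\<Sum>i<j. ms i)"
proof (induction j)
  case (Suc j)
  have "(\<Prod>i<Suc j. fact (ms i) :: nat) dvd fact (\<Sum>i<j. ms i) * fact (ms j)"
    using Suc by simp
  also have "\<dots> dvd fact ((\<Sum>i<j. ms i) + ms j)" by (rule fact_fact_dvd_fact)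
  finally show ?case by simp
qed simp

lemma multinomial_coeff_upd:
  assumes "t \<le> s" and "ms \<in> exp_vectors (s - t) j"
  shows "multinomial_coeff (Suc j) s (ms(j := t)) = of_nat (s choose t) * multinomial_coeff j (s - t) ms"
proof -
  define P where "P = (\<Prod>i<j. int (fact (ms i)))"
  have "(\<Prod>i<j. fact (ms i) :: nat) dvd fact (s - t)"
    using prod_fact_dvd_fact_sum[where j=j and ms=ms] assms by (simp add: exp_vectors_def)
  then have "P dvd int (fact (s - t))" unfolding P_def by (metis of_nat_dvd_iff of_nat_prod)
  then obtain q where q: "int (fact (s - t)) = P * q" by blast
  have "P \<noteq> 0" unfolding P_def by simp
  have fact_s: "int (fact s) = int (fact t) * int (fact (s - t)) * int (s choose t)"
    using binomial_fact_lemma[OF assms(1)] by (metis of_nat_mult)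
  have "(\<Prod>i<Suc j. int (fact ((ms(j := t)) i))) = P * int (fact t)"
    unfolding P_def using prod_lessThan_fun_upd[of "\<lambda>i x. int (fact x)" ms t j] by simp
  then have "multinomial_coeff (Suc j) s (ms(j := t)) = int (s choose t) * q"
    using \<open>P \<noteq> 0\<close> unfolding multinomial_coeff_def fact_s q by (simp add: ac_simps)
  moreover have "multinomial_coeff j (s - t) ms = q"
    unfolding multinomial_coeff_def q P_def[symmetric] using \<open>P \<noteq> 0\<close> by simp
  ultimately show ?thesis by simp
qed

lemma power_coeff_0_right: "power_coeff s k 0 y = (if s = 0 \<and> k = 0 then 1 else 0)"
  by (simp add: power_coeff_def exp_vectors_0 exp_weight_def multinomial_coeff_def exp_monomial_def)

text \<open>Expansion by the binomial theorem with respect to the highest variable \<open>y j\<close>.\<close>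
lemma power_coeff_Suc:
  "power_coeff s k (Suc j) y =
     (\<Sum>t\<le>s. if j * t \<le> k then of_nat (s choose t) * y j ^ t * power_coeff (s - t) (k - j * t) j y
             else 0)"
proof -
  let ?h = "\<lambda>(t, ms). ms(j := t)"
  let ?F = "\<lambda>ms. if exp_weight (Suc j) ms = k
                  then multinomial_coeff (Suc j) s ms * exp_monomial (Suc j) y ms else 0"
  have "power_coeff s k (Suc j) y = sum (?F \<circ> ?h) (SIGMA t:{..s}. exp_vectors (s - t) j)"
    unfolding power_coeff_def exp_vectors_Suc by (rule sum.reindex[OF inj_on_exp_vectors_upd])
  also have "\<dots> = (\<Sum>t\<le>s. \<Sum>ms\<in>exp_vectors (s - t) j. ?F (ms(j := t)))"
    by (subst sum.Sigma) (auto simp: finite_exp_vectors intro!: sum.cong split: prod.splits)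
  also have "\<dots> = (\<Sum>t\<le>s. if j * t \<le> k
                          then of_nat (s choose t) * y j ^ t * power_coeff (s - t) (k - j * t) j y
                          else 0)"
  proof (rule sum.cong[OF refl])
    fix t assume t: "t \<in> {..s}"
    have F: "?F (ms(j := t)) =
        (if exp_weight j ms + j * t = k
         then of_nat (s choose t) * y j ^ t * (multinomial_coeff j (s - t) ms * exp_monomial j y ms)
         else 0)" if "ms \<in> exp_vectors (s - t) j" for ms
      using multinomial_coeff_upd[of t s ms j] prod_lessThan_fun_upd[of "\<lambda>i x. y i ^ x" ms t j]
        that t
      by (simp add: exp_weight_def sum_lessThan_fun_upd exp_monomial_def)
    show "(\<Sum>ms\<in>exp_vectors (s - t) j. ?F (ms(j := t))) =
        (if j * t \<le> k then of_nat (s choose t) * y j ^ t * power_coeff (s - t) (k - j * t) j y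
         else 0)"
    proof (cases "j * t \<le> k")
      case True
      then have "(\<Sum>ms\<in>exp_vectors (s - t) j. ?F (ms(j := t))) =
          (\<Sum>ms\<in>exp_vectors (s - t) j. of_nat (s choose t) * y j ^ t *
             (if exp_weight j ms = k - j * t
              then multinomial_coeff j (s - t) ms * exp_monomial j y ms else 0))"
        by (intro sum.cong) (auto simp: F)
      with True show ?thesis by (simp add: power_coeff_def sum_distrib_left)
    qed (simp add: F)
  qed
  finally show ?thesis .
qed

definition digit_poly :: "(nat \<Rightarrow> 'a::comm_ring_1) \<Rightarrow> nat \<Rightarrow> 'a poly" where
  "digit_poly y j = (\<Sum>i<j. monom (y i) i)"

lemma coeff_digit_poly: "coeff (digit_poly y j) i = (if i < j then y i else 0)"
  by (simp add: digit_poly_def coeff_sum)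

lemma poly_digit_poly: "poly (digit_poly y j) c = (\<Sum>i<j. y i * c ^ i)"
  by (simp add: digit_poly_def poly_sum poly_monom)

lemma coeff_digit_poly_power: "coeff (digit_poly y j ^ s) k = power_coeff s k j y"
proof (induction j arbitrary: s k)
  case 0
  then show ?case by (cases s) (auto simp: digit_poly_def power_coeff_0_right)
next
  case (Suc j)
  have "digit_poly y (Suc j) = monom (y j) j + digit_poly y j" by (simp add: digit_poly_def)
  then have "coeff (digit_poly y (Suc j) ^ s) k =
      (\<Sum>t\<le>s. coeff (of_nat (s choose t) * monom (y j ^ t) (j * t) * digit_poly y j ^ (s - t)) k)"
    by (simp add: binomial_ring coeff_sum monom_power mult.commute)
  also have "\<dots> = power_coeff s k (Suc j) y"
    unfolding power_coeff_Suc
    by (rule sum.cong[OF refl])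
      (simp add: of_nat_poly coeff_monom_mult Suc.IH monom_0[symmetric] mult_monom flip: mult.assoc)
  finally show ?case .
qed

lemma power_coeff_Suc_eq: "k < j \<Longrightarrow> power_coeff s k (Suc j) y = power_coeff s k j y"
  unfolding power_coeff_Suc sum.atMost_shift by (simp add: power_coeff_Suc)

lemma power_coeff_eq_Suc: "k < j \<Longrightarrow> power_coeff s k j y = power_coeff s k (Suc k) y"
proof -
  have "power_coeff s k (Suc k + d) y = power_coeff s k (Suc k) y" for d
    by (induction d) (auto simp: power_coeff_Suc_eq)
  moreover assume "k < j"
  ultimately show ?thesis by (metis Suc_leI le_add_diff_inverse)
qed

lemma Pkj_eq_power_coeff: "Pkj k j y = power_coeff 3 k j y"
proof -
  have "power_coeff 3 k j y =
      (\<Sum>ms\<in>{ms \<in> exp_vectors 3 j. exp_weight j ms = k}. multinomial_coeff j 3 ms * exp_monomial j y ms)"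
    unfolding power_coeff_def by (rule sum.inter_filter[symmetric, OF finite_exp_vectors])
  also have "{ms \<in> exp_vectors 3 j. exp_weight j ms = k} =
      {ms. (\<forall>i\<ge>j. ms i = 0) \<and> (\<Sum>i<j. ms i) = 3 \<and> (\<Sum>i<j. i * ms i) = k}"
    by (auto simp: exp_vectors_def exp_weight_def)
  finally show ?thesis
    by (simp add: Pkj_def multinomial_coeff_def exp_monomial_def fact_numeral)
qed

lemma power_coeff_0_left: "power_coeff 0 k j y = (if k = 0 then 1 else 0)"
  by (induction j) (auto simp: power_coeff_0_right power_coeff_Suc)

lemma power_coeff_1_left: "power_coeff 1 k j y = (if k < j then y k else 0)"
  by (induction j) (auto simp: power_coeff_0_right power_coeff_Suc power_coeff_0_left less_Suc_eq)

lemma power_coeff_lowest: "0 < j \<Longrightarrow> power_coeff s 0 j y = y 0 ^ s"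
proof -
  have "power_coeff s 0 1 y = (\<Sum>t\<le>s. if t = s then y 0 ^ t else 0)"
    unfolding One_nat_def power_coeff_Suc by (rule sum.cong) (auto simp: power_coeff_0_right)
  moreover assume "0 < j"
  ultimately show ?thesis using power_coeff_eq_Suc[of 0 j s y] by simp
qed

lemma power_coeff_2_1: "2 \<le> j \<Longrightarrow> power_coeff 2 1 j y = 2 * y 0 * y 1"
proof -
  have "power_coeff 2 1 2 y = 2 * y 0 * y 1"
    by (simp add: numeral_2_eq_2 power_coeff_Suc power_coeff_0_right power_coeff_1_left
        power_coeff_0_left)
  moreover assume "2 \<le> j"
  ultimately show ?thesis
    using power_coeff_eq_Suc[of 1 j 2 y] by (cases "j = 2") (auto simp: numeral_2_eq_2)
qed

lemma power_coeff_3_1: "power_coeff 3 1 2 y = 3 * y 0 ^ 2 * y 1"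
  by (simp add: numeral_2_eq_2 numeral_3_eq_3 power_coeff_Suc power_coeff_0_right power_coeff_lowest)

lemma power_coeff_3_2: "power_coeff 3 2 3 y = 3 * y 0 ^ 2 * y 2 + 3 * y 0 * y 1 ^ 2"
  by (simp add: numeral_2_eq_2 numeral_3_eq_3 power_coeff_Suc power_coeff_0_right power_coeff_lowest
      power_coeff_1_left power_coeff_0_left algebra_simps power2_eq_square)

lemma power_coeff_3_top_terms:
  assumes "3 \<le> k"
  shows "power_coeff 3 k (Suc k) y =
           power_coeff 3 k (k - 1) y + 6 * y 0 * y 1 * y (k - 1) + 3 * y 0 ^ 2 * y k"
proof -
  obtain j where k: "k = Suc j" and j: "2 \<le> j" using assms by (cases k) auto
  have "power_coeff 3 (Suc j) (Suc (Suc j)) y =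
      power_coeff 3 (Suc j) (Suc j) y + 3 * y (Suc j) * power_coeff 2 0 (Suc j) y"
    by (subst power_coeff_Suc) (simp add: numeral_3_eq_3 numeral_2_eq_2)
  moreover have "power_coeff 3 (Suc j) (Suc j) y =
      power_coeff 3 (Suc j) j y + 3 * y j * power_coeff 2 1 j y"
    using j by (subst power_coeff_Suc) (simp add: numeral_3_eq_3 numeral_2_eq_2)
  ultimately show ?thesis
    using power_coeff_2_1[OF j] j unfolding k by (simp add: power_coeff_lowest)
qed

definition cube_digit :: "(nat \<Rightarrow> int) \<Rightarrow> nat \<Rightarrow> int" where
  "cube_digit x k =
    (if k = 0 then x 0 ^ 3
     else if k = 1 then 0
     else if k = 2 then x 0 ^ 2 * x 1
     else if k = 3 then x 0 ^ 2 * x 2 + Pkj 3 2 x + x 0 * x 1 ^ 2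
     else x 0 ^ 2 * x (k - 1) + Pkj k (k - 1) x + 2 * x 0 * x 1 * x (k - 2))"

text \<open>The top terms of the coefficient of \<open>T^(N-1)\<close> in \<open>X^3\<close>, divided by 3; \<open>cube_digit\<close>
  counts them at place \<open>N\<close> instead.\<close>
definition cube_overflow :: "(nat \<Rightarrow> int) \<Rightarrow> nat \<Rightarrow> int" where
  "cube_overflow x N =
    (if N = 2 then x 0 ^ 2 * x 1
     else if N = 3 then x 0 ^ 2 * x 2 + x 0 * x 1 ^ 2
     else if N \<ge> 4 then x 0 ^ 2 * x (N - 1) + 2 * x 0 * x 1 * x (N - 2)
     else 0)"

lemma power_coeff_3_eq_cube_digit:
  "power_coeff 3 k (Suc k) x = cube_digit x k + 3 * cube_overflow x (Suc k) - cube_overflow x k"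
proof -
  consider "k = 0" | "k = 1" | "k = 2" | "k = 3" | "k \<ge> 4" by linarith
  then show ?thesis
  proof cases
    case 1
    then show ?thesis by (simp add: power_coeff_lowest cube_digit_def cube_overflow_def)
  next
    case 2
    then show ?thesis
      using power_coeff_3_1[of x] by (simp add: cube_digit_def cube_overflow_def numeral_2_eq_2)
  next
    case 3
    then show ?thesis using power_coeff_3_2[of x]
      by (simp add: cube_digit_def cube_overflow_def numeral_3_eq_3 algebra_simps)
  next
    case 4
    then show ?thesis using power_coeff_3_top_terms[of 3 x]
      by (simp add: cube_digit_def cube_overflow_def Pkj_eq_power_coeff algebra_simps)
  next
    case 5
    then have "Suc k - 1 = k" "Suc k - 2 = k - 1" by auto
    with 5 show ?thesis using power_coeff_3_top_terms[of k x]
      by (simp add: cube_digit_def cube_overflow_def Pkj_eq_power_coeff algebra_simps)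
  qed
qed

lemma sum_power_coeff_3:
  "(\<Sum>k<N. power_coeff 3 k (Suc k) x * 3 ^ k) =
     (\<Sum>k<N. cube_digit x k * 3 ^ k) + 3 ^ N * cube_overflow x N"
proof (induction N)
  case (Suc N)
  then show ?case by (simp add: power_coeff_3_eq_cube_digit algebra_simps)
qed (simp add: cube_overflow_def)

definition linear_coeff :: "nat \<Rightarrow> (nat \<Rightarrow> int) \<Rightarrow> (nat \<Rightarrow> int) \<Rightarrow> nat \<Rightarrow> int" where
  "linear_coeff m a x k = (if m \<le> k then (\<Sum>i\<le>k - m. x (k - m - i) * a i) else 0)"

lemma coeff_linear_term:
  assumes "k < N"
  shows "coeff (monom 1 m * (digit_poly a N * digit_poly x N)) k = linear_coeff m a x k"
proof (cases "m \<le> k")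
  case True
  then have "coeff (monom 1 m * (digit_poly a N * digit_poly x N)) k =
      (\<Sum>i\<le>k - m. coeff (digit_poly a N) i * coeff (digit_poly x N) (k - m - i))"
    unfolding coeff_monom_mult by (simp add: coeff_mult)
  also have "\<dots> = (\<Sum>i\<le>k - m. x (k - m - i) * a i)"
    by (rule sum.cong) (use assms True in \<open>auto simp: coeff_digit_poly\<close>)
  finally show ?thesis using True by (simp add: linear_coeff_def)
qed (simp add: coeff_monom_mult linear_coeff_def)

lemma Lk_eq_cube_digit:
  "4 \<le> m \<Longrightarrow> 2 \<le> k \<Longrightarrow> Lk m a x k = cube_digit x k + linear_coeff m a x k"
  by (simp add: Lk_def cube_digit_def linear_coeff_def)

lemma pow_dvd_poly_minus_low_coeffs:
  fixes p :: "'a::comm_ring_1 poly"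
  shows "c ^ N dvd poly p c - (\<Sum>k<N. coeff p k * c ^ k)"
proof -
  define K where "K = max N (Suc (degree p))"
  have "poly p c = (\<Sum>k<K. coeff p k * c ^ k)"
    unfolding poly_altdef by (rule sum.mono_neutral_left) (auto simp: K_def coeff_eq_0)
  also have "\<dots> = (\<Sum>k<N. coeff p k * c ^ k) + (\<Sum>k\<in>{N..<K}. coeff p k * c ^ k)"
    by (subst sum.union_disjoint[symmetric]) (auto simp: K_def intro!: sum.cong)
  finally have "poly p c - (\<Sum>k<N. coeff p k * c ^ k) = (\<Sum>k\<in>{N..<K}. coeff p k * c ^ k)"
    by simp
  then show ?thesis by (auto intro!: dvd_sum dvd_mult le_imp_power_dvd)
qed

definition residual_digit :: "nat \<Rightarrow> (nat \<Rightarrow> int) \<Rightarrow> (nat \<Rightarrow> int) \<Rightarrow> (nat \<Rightarrow> int) \<Rightarrow> nat \<Rightarrow> int" where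
  "residual_digit m a b x k =
    (if k = 0 then x 0 ^ 3 - b 0 else if k = 1 then - b 1 else Lk m a x k - b k)"

lemma residual_digit_eq:
  "4 \<le> m \<Longrightarrow> residual_digit m a b x k = cube_digit x k + linear_coeff m a x k - b k"
  by (simp add: residual_digit_def Lk_eq_cube_digit) (simp add: cube_digit_def linear_coeff_def)

lemma truncated_cubic_cong:
  assumes "4 \<le> m"
  shows "[trunc3 x N ^ 3 + 3 ^ m * trunc3 a N * trunc3 x N - trunc3 b N
          = (\<Sum>k<N. residual_digit m a b x k * 3 ^ k)] (mod 3 ^ N)"
proof -
  define Q where
    "Q = digit_poly x N ^ 3 + monom 1 m * (digit_poly a N * digit_poly x N) - digit_poly b N"
  define S where "S = (\<Sum>k<N. residual_digit m a b x k * 3 ^ k)"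
  have "coeff Q k = power_coeff 3 k (Suc k) x + linear_coeff m a x k - b k" if "k < N" for k
    using coeff_linear_term[OF that] power_coeff_eq_Suc[OF that, of 3 x] that
    by (simp add: Q_def coeff_digit_poly coeff_digit_poly_power)
  then have "coeff Q k = residual_digit m a b x k + (power_coeff 3 k (Suc k) x - cube_digit x k)"
    if "k < N" for k
    using that residual_digit_eq[OF assms, of a b x k] by force
  then have "(\<Sum>k<N. coeff Q k * 3 ^ k) = S +
      ((\<Sum>k<N. power_coeff 3 k (Suc k) x * 3 ^ k) - (\<Sum>k<N. cube_digit x k * 3 ^ k))"
    unfolding S_def by (simp add: sum.distrib sum_subtractf distrib_right left_diff_distrib)
  also have "\<dots> = S + 3 ^ N * cube_overflow x N"
    by (simp add: sum_power_coeff_3)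
  finally have "poly Q 3 - S = (poly Q 3 - (\<Sum>k<N. coeff Q k * 3 ^ k)) + 3 ^ N * cube_overflow x N"
    by simp
  then have "3 ^ N dvd poly Q 3 - S"
    using pow_dvd_poly_minus_low_coeffs[of 3 N Q] by (metis dvd_add dvd_triv_left)
  moreover have "poly Q 3 = trunc3 x N ^ 3 + 3 ^ m * trunc3 a N * trunc3 x N - trunc3 b N"
    by (simp add: Q_def poly_digit_poly poly_monom trunc3_def)
  ultimately show ?thesis
    unfolding S_def by (simp add: cong_iff_dvd_diff)
qed

lemma carry_sum_eq:
  fixes e M :: "nat \<Rightarrow> int"
  assumes M1: "M 1 = (e 0 + p * e 1) div p ^ 2"
    and MS: "\<And>n. M (Suc (Suc n)) = (e (Suc (Suc n)) + M (Suc n)) div p"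
    and dvd1: "p ^ 2 dvd e 0 + p * e 1"
    and dvd_k: "\<And>k. 2 \<le> k \<Longrightarrow> k < N \<Longrightarrow> p dvd e k + M (k - 1)"
    and "2 \<le> N"
  shows "(\<Sum>k<N. e k * p ^ k) = p ^ N * M (N - 1)"
  using \<open>2 \<le> N\<close>
proof (induction N rule: dec_induct)
  case base
  then show ?case using M1 dvd1 by (simp add: numeral_2_eq_2)
next
  case (step n)
  then obtain n' where n: "n = Suc (Suc n')" by (metis add_2_eq_Suc le_Suc_ex)
  have "(\<Sum>k<Suc n. e k * p ^ k) = p ^ n * (e n + M (n - 1))"
    using step.IH by (simp add: algebra_simps)
  also have "e n + M (n - 1) = p * M n"
    using MS[of n'] dvd_k[of n] step.hyps unfolding n by simp
  finally show ?case by simp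
qed

lemma carry_dvd_iff:
  fixes e M :: "nat \<Rightarrow> int"
  assumes M1: "M 1 = (e 0 + p * e 1) div p ^ 2"
    and MS: "\<And>n. M (Suc (Suc n)) = (e (Suc (Suc n)) + M (Suc n)) div p"
    and "p \<noteq> 0"
  shows "(\<forall>N. p ^ N dvd (\<Sum>k<N. e k * p ^ k)) \<longleftrightarrow>
         p dvd e 0 \<and> p ^ 2 dvd e 0 + p * e 1 \<and> (\<forall>k\<ge>2. p dvd e k + M (k - 1))"
proof
  assume H: "\<forall>N. p ^ N dvd (\<Sum>k<N. e k * p ^ k)"
  have dvd0: "p dvd e 0" using H[rule_format, of 1] by simp
  have dvd1: "p ^ 2 dvd e 0 + p * e 1"
    using H[rule_format, of 2] by (simp add: numeral_2_eq_2 algebra_simps)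
  have "p dvd e k + M (k - 1)" if "2 \<le> k" for k
    using that
  proof (induction k rule: less_induct)
    case (less k)
    have "(\<Sum>i<Suc k. e i * p ^ i) = p ^ k * (e k + M (k - 1))"
      using carry_sum_eq[OF M1 MS dvd1 less.IH less.prems] by (simp add: algebra_simps)
    moreover have "p ^ Suc k dvd (\<Sum>i<Suc k. e i * p ^ i)" using H by blast
    ultimately show ?case using \<open>p \<noteq> 0\<close> by (simp add: mult.commute[of p])
  qed
  with dvd0 dvd1 show "p dvd e 0 \<and> p ^ 2 dvd e 0 + p * e 1 \<and> (\<forall>k\<ge>2. p dvd e k + M (k - 1))"
    by blast
next
  assume H: "p dvd e 0 \<and> p ^ 2 dvd e 0 + p * e 1 \<and> (\<forall>k\<ge>2. p dvd e k + M (k - 1))"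
  show "\<forall>N. p ^ N dvd (\<Sum>k<N. e k * p ^ k)"
  proof
    fix N
    show "p ^ N dvd (\<Sum>k<N. e k * p ^ k)"
    proof (cases "2 \<le> N")
      case True
      then show ?thesis using carry_sum_eq[OF M1 MS, of N] H by simp
    next
      case False
      then have "N = 0 \<or> N = 1" by auto
      then show ?thesis using H by auto
    qed
  qed
qed

theorem theorem3p6:
  fixes a b x :: "nat \<Rightarrow> int" and m :: nat
  assumes "digits3 a" and "a 0 \<noteq> 0" and "m \<ge> 4"
    and "digits3 b" and "b 0 \<noteq> 0"
    and "(b 0, b 1) = (1, 0) \<or> (b 0, b 1) = (2, 2)"
    and "digits3 x" and "x 0 \<noteq> 0"
  shows "cubic_sol3 m a b x \<longleftrightarrow>
    ([x 0 ^ 3 = b 0] (mod 3) \<and> [x 0 ^ 3 = b 0 + 3 * b 1] (mod 9) \<and>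
     (\<forall>k\<ge>2. [Lk m a x k + Mk m a b x (k - 1) = b k] (mod 3)))"
proof -
  let ?e = "residual_digit m a b x"
  have "cubic_sol3 m a b x \<longleftrightarrow> (\<forall>N. (3::int) ^ N dvd (\<Sum>k<N. ?e k * 3 ^ k))"
    unfolding cubic_sol3_def cong_iff_dvd_diff
    using cong_dvd_iff[OF truncated_cubic_cong[OF \<open>m \<ge> 4\<close>]] by simp
  also have "\<dots> \<longleftrightarrow> 3 dvd ?e 0 \<and> 3 ^ 2 dvd ?e 0 + 3 * ?e 1 \<and>
                     (\<forall>k\<ge>2. 3 dvd ?e k + Mk m a b x (k - 1))"
    by (rule carry_dvd_iff) (simp_all add: residual_digit_def)
  also have "\<dots> \<longleftrightarrow> [x 0 ^ 3 = b 0] (mod 3) \<and> [x 0 ^ 3 = b 0 + 3 * b 1] (mod 9) \<and>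
                     (\<forall>k\<ge>2. [Lk m a x k + Mk m a b x (k - 1) = b k] (mod 3))"
    by (simp add: cong_iff_dvd_diff residual_digit_def algebra_simps)
  finally show ?thesis .
qed

end
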